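(* Let $N\ge2$, $g\ge1$, let $A(z)=\sum_{k=0}^{g-1}z^kA^{(k)}$ ($A^{(g-1)}\neq0$) be a polynomial loop $\mathbb{T}\to\mathrm{U}_N(\mathbb{C})$ of genus $g$ with entries $A_{i,j}(z)$, and let $T_i$ be the operators on $L^2(\mathbb{T})$, $(T_if)(z)=m_i(z)f(z^N)$, $m_i(z)=\sum_{j=0}^{N-1}A_{i,j}(z^N)z^j$. Let $e_n(z)=z^n$, $r_0=\lfloor (gN-1)/(N-1)\rfloor$, $\mathcal{K}_0=\operatorname{span}\{e_{-1},\dots,e_{-r_0}\}$ and $\mathcal{K}_1=\operatorname{span}\{e_0,e_{-1},\dots,e_{-(r_0-1)}\}$. Call a subspace $\mathcal{M}$ cyclic if the closed linear span of $\{T_{i_1}\cdots T_{i_n}\xi: n\ge0,\ i_1,\dots,i_n\in\{0,\dots,N-1\},\ \xi\in\mathcal{M}\}$ is $L^2(\mathbb{T})$. Then: (1) if $T_i^*e_0\in\mathbb{C}e_0$ for all $i$, then $\mathcal{K}_0$ is not cyclic; (2) if $N-1$ divides $gN-1$ and $T_i^*e_{-r_0}\in\mathbb{C}e_{-r_0}$ for all $i$, then $\mathcal{K}_1$ is not cyclic; (3) if $\lambda_0:=\sum_{i}|A^{(0)}_{i,0}|^2=0$, then $\mathcal{K}_0$ is cyclic.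
   Context: $\mathbb{T}$ is the unit circle with normalized Haar measure; $A^{(0)}_{i,0}$ denotes the $(i,0)$ entry of the matrix coefficient $A^{(0)}$ (indices $0,\dots,N-1$). *)

theory Defs
  imports "HOL-Analysis.Analysis"
begin

text \<open>Functions on the unit circle are represented as functions on the complex plane;
  only their values on the unit circle matter. The normalized Haar measure on the
  circle is the pushforward of Lebesgue measure on [0,1] under t maps to cis(2 pi t).\<close>

definition circ :: "real \<Rightarrow> complex" where
  "circ t = cis (2 * pi * t)"

definition L2T :: "(complex \<Rightarrow> complex) set" where
  "L2T = {f. (\<lambda>t. f (circ t)) \<in> borel_measurable (lebesgue_on {0..1}) \<and>
             integrable (lebesgue_on {0..1}) (\<lambda>t. (cmod (f (circ t)))\<^sup>2)}"

definition l2_inner :: "(complex \<Rightarrow> complex) \<Rightarrow> (complex \<Rightarrow> complex) \<Rightarrow> complex" where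
  "l2_inner f g = integral\<^sup>L (lebesgue_on {0..1}) (\<lambda>t. f (circ t) * cnj (g (circ t)))"

definition l2_norm :: "(complex \<Rightarrow> complex) \<Rightarrow> real" where
  "l2_norm f = sqrt (integral\<^sup>L (lebesgue_on {0..1}) (\<lambda>t. (cmod (f (circ t)))\<^sup>2))"

definition e :: "int \<Rightarrow> complex \<Rightarrow> complex" where
  "e n z = z powi n"

text \<open>Polynomial loop A(z) = sum_{k<g} z^k A^(k); Acoef k i j is the (i,j) entry of A^(k).\<close>
definition Aent :: "(nat \<Rightarrow> nat \<Rightarrow> nat \<Rightarrow> complex) \<Rightarrow> nat \<Rightarrow> nat \<Rightarrow> nat \<Rightarrow> complex \<Rightarrow> complex" where
  "Aent Acoef g i j z = (\<Sum>k<g. z ^ k * Acoef k i j)"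

definition unitary_mat :: "nat \<Rightarrow> (nat \<Rightarrow> nat \<Rightarrow> complex) \<Rightarrow> bool" where
  "unitary_mat N U \<longleftrightarrow>
     (\<forall>i<N. \<forall>j<N. (\<Sum>l<N. U i l * cnj (U j l)) = (if i = j then 1 else 0)) \<and>
     (\<forall>i<N. \<forall>j<N. (\<Sum>l<N. cnj (U l i) * U l j) = (if i = j then 1 else 0))"

definition mfun :: "nat \<Rightarrow> nat \<Rightarrow> (nat \<Rightarrow> nat \<Rightarrow> nat \<Rightarrow> complex) \<Rightarrow> nat \<Rightarrow> complex \<Rightarrow> complex" where
  "mfun N g Acoef i z = (\<Sum>j<N. Aent Acoef g i j (z ^ N) * z ^ j)"

definition Top :: "nat \<Rightarrow> nat \<Rightarrow> (nat \<Rightarrow> nat \<Rightarrow> nat \<Rightarrow> complex) \<Rightarrow> nat \<Rightarrow>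
    (complex \<Rightarrow> complex) \<Rightarrow> (complex \<Rightarrow> complex)" where
  "Top N g Acoef i f = (\<lambda>z. mfun N g Acoef i z * f (z ^ N))"

definition Tword :: "nat \<Rightarrow> nat \<Rightarrow> (nat \<Rightarrow> nat \<Rightarrow> nat \<Rightarrow> complex) \<Rightarrow> nat list \<Rightarrow>
    (complex \<Rightarrow> complex) \<Rightarrow> (complex \<Rightarrow> complex)" where
  "Tword N g Acoef w xi = foldr (Top N g Acoef) w xi"

text \<open>T^* v is in C v (adjoint unfolded through the inner product): there is c with
  T^* v = c v, i.e. <T f, v> = <f, c v> for all f in L^2.\<close>
definition adj_eigvec :: "((complex \<Rightarrow> complex) \<Rightarrow> (complex \<Rightarrow> complex)) \<Rightarrow> (complex \<Rightarrow> complex) \<Rightarrow> bool" where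
  "adj_eigvec T v \<longleftrightarrow> (\<exists>c. \<forall>f\<in>L2T. l2_inner (T f) v = l2_inner f (\<lambda>z. c * v z))"

definition clin_span :: "(complex \<Rightarrow> complex) set \<Rightarrow> (complex \<Rightarrow> complex) set" where
  "clin_span S = {(\<lambda>z. \<Sum>x\<in>F. c x * x z) | F c. finite F \<and> F \<subseteq> S}"

definition cyclic :: "nat \<Rightarrow> nat \<Rightarrow> (nat \<Rightarrow> nat \<Rightarrow> nat \<Rightarrow> complex) \<Rightarrow> (complex \<Rightarrow> complex) set \<Rightarrow> bool" where
  "cyclic N g Acoef M \<longleftrightarrow>
     (\<forall>f\<in>L2T. \<forall>\<epsilon>>0. \<exists>h\<in>clin_span {Tword N g Acoef w xi | w xi. set w \<subseteq> {..<N} \<and> xi \<in> M}.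
        l2_norm (\<lambda>z. f z - h z) < \<epsilon>)"

end

theory Submission
  imports Defs
begin

(* Parts (1) and (2): if e_k is an eigenvector of every T_i^*, then each T_i maps the
   orthogonal complement of e_k into itself. K_0 and K_1 are spanned by monomials other than
   e_0 resp. e_(-r0), so all T-words applied to them stay orthogonal to the unit vector e_k,
   which therefore keeps distance at least 1 from their span.

   Part (3): the Cuntz relation sum_i T_i T_i^* = 1 writes e_n as sum_i T_i (T_i^* e_n), and on
   the circle T_i^* e_n is a combination of e_(n div N - q), q < g. Every such index is strictly
   closer to the window [-r0, 0] than n when n lies outside it; inside the window e_(-1), ...,
   e_(-r0) belong to K_0, and for n = 0 the hypothesis lambda_0 = 0 removes the q = 0 term. By
   induction every monomial, hence every trigonometric polynomial, agrees on the circle with an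
   element of the span of the T-words of K_0. Trigonometric polynomials are dense in L^2
   (continuous functions are dense by Lusin-type approximation and dominated convergence, and
   Stone-Weierstrass approximates those uniformly), so K_0 is cyclic. *)

section \<open>The unit circle and orthogonality\<close>

lemma norm_circ [simp]: "cmod (circ t) = 1"
  by (simp add: circ_def)

lemma continuous_on_circ [continuous_intros]: "continuous_on S circ"
  unfolding circ_def cis_conv_exp by (intro continuous_intros)

lemma e_circ: "e n (circ t) = cis (2 * pi * (real_of_int n * t))"
  by (simp add: e_def circ_def cis_power_int mult_ac)

lemma continuous_on_sphere_e: "continuous_on (sphere 0 1) (e n)"
  unfolding e_def by (intro continuous_intros) auto

lemma continuous_on_circ_compose:
  fixes h :: "complex \<Rightarrow> 'a::euclidean_space"
  assumes "continuous_on (sphere 0 1) h"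
  shows "continuous_on S (\<lambda>t. h (circ t))"
  by (rule continuous_on_compose2[OF assms continuous_on_circ]) auto

lemma integrable_circ_compose:
  fixes h :: "complex \<Rightarrow> 'a::euclidean_space"
  assumes "continuous_on (sphere 0 1) h"
  shows "integrable (lebesgue_on {0..1}) (\<lambda>t. h (circ t))"
  by (rule continuous_imp_integrable_real, rule continuous_on_circ_compose[OF assms])

lemma continuous_on_sphere_L2T:
  assumes "continuous_on (sphere 0 1) h"
  shows "h \<in> L2T"
  unfolding L2T_def
  by (intro CollectI conjI continuous_imp_measurable_on_sets_lebesgue continuous_imp_integrable_real
      continuous_intros continuous_on_circ_compose assms) auto

lemma has_integral_cis_int:
  fixes k :: int
  shows "((\<lambda>t. cis (2 * pi * (real_of_int k * t))) has_integral (if k = 0 then 1 else 0)) {0..1}"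
proof (cases "k = 0")
  case True
  then show ?thesis using has_integral_const_real[of "1::complex" 0 1] by simp
next
  case False
  define c where "c = \<i> * complex_of_real (2 * pi * real_of_int k)"
  have "c \<noteq> 0" using False by (simp add: c_def)
  have deriv: "((\<lambda>t. exp (c * of_real t) / c)
      has_vector_derivative cis (2 * pi * (real_of_int k * t))) (at t within {0..1})" for t
  proof -
    have "((\<lambda>z. exp (c * z) / c) has_field_derivative c * exp (c * of_real t) / c) (at (of_real t))"
      by (auto intro!: derivative_eq_intros)
    from has_vector_derivative_real_field[OF this] \<open>c \<noteq> 0\<close> show ?thesis
      by (simp add: c_def cis_conv_exp mult_ac has_vector_derivative_at_within)
  qed
  have "exp (c * of_real 1) = 1"
    by (simp add: c_def cis_conv_exp[symmetric] mult_ac cis_multiple_2pi)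
  with fundamental_theorem_of_calculus[of 0 1, OF _ deriv] False show ?thesis
    by simp
qed

lemma l2_inner_e_e: "l2_inner (e m) (e n) = (if m = n then 1 else 0)"
proof -
  have eq: "e m (circ t) * cnj (e n (circ t)) = cis (2 * pi * (real_of_int (m - n) * t))" for t
    by (simp add: e_circ cis_cnj cis_mult algebra_simps)
  have "integrable (lebesgue_on {0..1}) (\<lambda>t. cis (2 * pi * (real_of_int (m - n) * t)))"
    by (intro continuous_imp_integrable_real) (auto simp: cis_conv_exp intro!: continuous_intros)
  then show ?thesis
    using has_integral_cis_int[of "m - n"]
    by (simp add: l2_inner_def eq lebesgue_integral_eq_integral integral_unique)
qed

lemma l2_inner_sum_left:
  assumes "finite F" "\<And>x. x \<in> F \<Longrightarrow> continuous_on (sphere 0 1) x" "continuous_on (sphere 0 1) v"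
  shows "l2_inner (\<lambda>z. \<Sum>x\<in>F. c x * x z) v = (\<Sum>x\<in>F. c x * l2_inner x v)"
proof -
  have "integrable (lebesgue_on {0..1}) (\<lambda>t. c x * (x (circ t) * cnj (v (circ t))))"
    if "x \<in> F" for x
    using that assms by (intro integrable_mult_right integrable_circ_compose continuous_intros) auto
  then show ?thesis
    unfolding l2_inner_def
    by (simp add: sum_distrib_right mult.assoc Bochner_Integration.integral_sum)
qed

lemma l2_inner_scale_right: "l2_inner f (\<lambda>z. c * v z) = cnj c * l2_inner f v"
  unfolding l2_inner_def by (simp add: mult_ac)

lemma continuous_on_sphere_clin_span:
  assumes "\<And>x. x \<in> S \<Longrightarrow> continuous_on (sphere 0 1) x" "h \<in> clin_span S"
  shows "continuous_on (sphere 0 1) h"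
  using assms unfolding clin_span_def by (auto intro!: continuous_intros)

lemma l2_norm_diff_ge_1_if_orthogonal:
  fixes v h :: "complex \<Rightarrow> complex"
  assumes v: "continuous_on (sphere 0 1) v" "\<And>z. cmod z = 1 \<Longrightarrow> cmod (v z) = 1"
    and h: "continuous_on (sphere 0 1) h" "l2_inner h v = 0"
  shows "1 \<le> l2_norm (\<lambda>z. v z - h z)"
proof -
  let ?M = "lebesgue_on {0..1::real}"
  define p where "p t = h (circ t) * cnj (v (circ t))" for t
  have p: "integrable ?M p" "integral\<^sup>L ?M p = 0"
    using h unfolding p_def l2_inner_def
    by (auto intro!: integrable_circ_compose continuous_intros v)
  have pointwise: "1 - 2 * Re (p t) \<le> (cmod (v (circ t) - h (circ t)))\<^sup>2" for t
  proof -
    have "(Re (v (circ t)))\<^sup>2 + (Im (v (circ t)))\<^sup>2 = 1"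
      using v(2)[of "circ t"] by (simp add: cmod_power2[symmetric])
    then have "(cmod (v (circ t) - h (circ t)))\<^sup>2 = 1 + (cmod (h (circ t)))\<^sup>2 - 2 * Re (p t)"
      by (simp add: p_def cmod_power2) (simp add: power2_eq_square algebra_simps)
    then show ?thesis by simp
  qed
  have "1 = integral\<^sup>L ?M (\<lambda>t. 1 - 2 * Re (p t))"
    using p by (simp add: integral_Re measure_restrict_space)
  also have "\<dots> \<le> integral\<^sup>L ?M (\<lambda>t. (cmod (v (circ t) - h (circ t)))\<^sup>2)"
  proof (rule integral_mono[OF _ _ pointwise])
    show "integrable ?M (\<lambda>t. (cmod (v (circ t) - h (circ t)))\<^sup>2)"
      by (rule integrable_circ_compose[of "\<lambda>z. (cmod (v z - h z))\<^sup>2"]) (intro continuous_intros v h)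
  qed (use p in simp)
  finally show ?thesis
    unfolding l2_norm_def by simp
qed

lemma clin_span_orthogonal:
  assumes "\<And>x. x \<in> S \<Longrightarrow> continuous_on (sphere 0 1) x \<and> l2_inner x v = 0"
    and "continuous_on (sphere 0 1) v" "h \<in> clin_span S"
  shows "continuous_on (sphere 0 1) h \<and> l2_inner h v = 0"
proof -
  obtain F c where F: "finite F" "F \<subseteq> S" and h: "h = (\<lambda>z. \<Sum>x\<in>F. c x * x z)"
    using assms(3) unfolding clin_span_def by blast
  have "continuous_on (sphere 0 1) x" "l2_inner x v = 0" if "x \<in> F" for x
    using that F assms(1) by auto
  with F(1) assms(2) show ?thesis
    unfolding h by (simp add: l2_inner_sum_left continuous_on_sum continuous_on_mult_left)
qed

definition generators ::
    "nat \<Rightarrow> nat \<Rightarrow> (nat \<Rightarrow> nat \<Rightarrow> nat \<Rightarrow> complex) \<Rightarrow> (complex \<Rightarrow> complex) set \<Rightarrow> (complex \<Rightarrow> complex) set"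
  where "generators N g Acoef M = {Tword N g Acoef w xi | w xi. set w \<subseteq> {..<N} \<and> xi \<in> M}"

lemma cyclic_iff_generators:
  "cyclic N g Acoef M \<longleftrightarrow>
     (\<forall>f\<in>L2T. \<forall>\<epsilon>>0. \<exists>h\<in>clin_span (generators N g Acoef M). l2_norm (\<lambda>z. f z - h z) < \<epsilon>)"
  unfolding cyclic_def generators_def ..

lemma Tword_Nil [simp]: "Tword N g Acoef [] xi = xi"
  by (simp add: Tword_def)

lemma Tword_Cons [simp]: "Tword N g Acoef (i # w) xi = Top N g Acoef i (Tword N g Acoef w xi)"
  by (simp add: Tword_def)

lemma continuous_on_sphere_Top:
  assumes "continuous_on (sphere 0 1) h"
  shows "continuous_on (sphere 0 1) (Top N g Acoef i h)"
  unfolding Top_def mfun_def Aent_def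
  by (intro continuous_intros continuous_on_compose2[OF assms]) (auto simp: norm_power)

lemma adj_eigvec_orthogonal:
  assumes "adj_eigvec T v" "f \<in> L2T" "l2_inner f v = 0"
  shows "l2_inner (T f) v = 0"
  using assms unfolding adj_eigvec_def by (auto simp: l2_inner_scale_right)

lemma generators_orthogonal:
  assumes eig: "\<forall>i<N. adj_eigvec (Top N g Acoef i) v"
    and M: "\<And>xi. xi \<in> M \<Longrightarrow> continuous_on (sphere 0 1) xi \<and> l2_inner xi v = 0"
    and x: "x \<in> generators N g Acoef M"
  shows "continuous_on (sphere 0 1) x \<and> l2_inner x v = 0"
proof -
  obtain w xi where x: "x = Tword N g Acoef w xi" and w: "set w \<subseteq> {..<N}" and xi: "xi \<in> M"
    using x unfolding generators_def by blast
  from w show ?thesis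
    unfolding x
  proof (induction w)
    case Nil
    then show ?case using M[OF xi] by simp
  next
    case (Cons i w)
    then have "continuous_on (sphere 0 1) (Tword N g Acoef w xi)"
      and "l2_inner (Tword N g Acoef w xi) v = 0" and "adj_eigvec (Top N g Acoef i) v"
      using eig by auto
    then show ?case
      by (simp add: continuous_on_sphere_Top adj_eigvec_orthogonal continuous_on_sphere_L2T)
  qed
qed

lemma not_cyclic_if_orthogonal:
  assumes eig: "\<forall>i<N. adj_eigvec (Top N g Acoef i) (e k)"
    and M: "\<And>xi. xi \<in> M \<Longrightarrow> continuous_on (sphere 0 1) xi \<and> l2_inner xi (e k) = 0"
  shows "\<not> cyclic N g Acoef M"
proof
  assume "cyclic N g Acoef M"
  then obtain h where h: "h \<in> clin_span (generators N g Acoef M)" "l2_norm (\<lambda>z. e k z - h z) < 1"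
    using continuous_on_sphere_L2T[OF continuous_on_sphere_e] unfolding cyclic_iff_generators
    by (meson zero_less_one)
  have "continuous_on (sphere 0 1) h \<and> l2_inner h (e k) = 0"
    using generators_orthogonal[OF eig M] continuous_on_sphere_e h(1) by (rule clin_span_orthogonal)
  moreover have "cmod (e k z) = 1" if "cmod z = 1" for z
    using that by (simp add: e_def norm_power_int)
  ultimately have "1 \<le> l2_norm (\<lambda>z. e k z - h z)"
    by (intro l2_norm_diff_ge_1_if_orthogonal continuous_on_sphere_e) auto
  with h(2) show False by simp
qed

lemma monomial_span_orthogonal:
  assumes "k \<notin> S" "xi \<in> clin_span (e ` S)"
  shows "continuous_on (sphere 0 1) xi \<and> l2_inner xi (e k) = 0"
  using _ continuous_on_sphere_e assms(2)
  by (rule clin_span_orthogonal) (use assms(1) in \<open>auto simp: continuous_on_sphere_e l2_inner_e_e\<close>)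

lemma not_cyclic_K0:
  assumes "\<forall>i<N. adj_eigvec (Top N g Acoef i) (e 0)"
  shows "\<not> cyclic N g Acoef (clin_span {e (- int n) | n. 1 \<le> n \<and> n \<le> r})"
proof -
  have "{e (- int n) | n. 1 \<le> n \<and> n \<le> r} = e ` {- int n | n. 1 \<le> n \<and> n \<le> r}"
    by blast
  then show ?thesis
    by (intro not_cyclic_if_orthogonal[OF assms] monomial_span_orthogonal) auto
qed

lemma not_cyclic_K1:
  assumes "\<forall>i<N. adj_eigvec (Top N g Acoef i) (e (- int r))" "r \<ge> 1"
  shows "\<not> cyclic N g Acoef (clin_span {e (- int n) | n. n \<le> r - 1})"
proof -
  have "{e (- int n) | n. n \<le> r - 1} = e ` {- int n | n. n \<le> r - 1}"
    by blast
  then show ?thesis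
    using assms(2) by (intro not_cyclic_if_orthogonal[OF assms(1)] monomial_span_orthogonal) auto
qed

section \<open>Spans on the unit circle and the Cuntz relation\<close>

lemma clin_span_indexed:
  assumes "finite J" "\<And>j. j \<in> J \<Longrightarrow> f j \<in> S"
  shows "(\<lambda>z. \<Sum>j\<in>J. c j * f j z) \<in> clin_span S"
proof -
  define d where "d x = (\<Sum>j\<in>{j\<in>J. f j = x}. c j)" for x
  have "(\<Sum>j\<in>J. c j * f j z) = (\<Sum>x\<in>f ` J. d x * x z)" for z
    unfolding d_def sum_distrib_right using sum.image_gen[OF assms(1), of "\<lambda>j. c j * f j z" f]
    by (auto intro!: sum.cong)
  moreover have "finite (f ` J)" "f ` J \<subseteq> S"
    using assms by auto
  ultimately show ?thesis
    unfolding clin_span_def by blast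
qed

lemma clin_span_sum:
  assumes "finite J" "\<And>j. j \<in> J \<Longrightarrow> f j \<in> clin_span S"
  shows "(\<lambda>z. \<Sum>j\<in>J. c j * f j z) \<in> clin_span S"
proof -
  have "\<forall>j\<in>J. \<exists>F d. finite F \<and> F \<subseteq> S \<and> f j = (\<lambda>z. \<Sum>x\<in>F. d x * x z)"
    using assms(2) unfolding clin_span_def by blast
  from bchoice[OF this] obtain F
    where "\<forall>j\<in>J. \<exists>d. finite (F j) \<and> F j \<subseteq> S \<and> f j = (\<lambda>z. \<Sum>x\<in>F j. d x * x z)" ..
  from bchoice[OF this] obtain d
    where F: "\<forall>j\<in>J. finite (F j) \<and> F j \<subseteq> S \<and> f j = (\<lambda>z. \<Sum>x\<in>F j. d j x * x z)" ..
  have "(\<lambda>z. \<Sum>p\<in>Sigma J F. (c (fst p) * d (fst p) (snd p)) * snd p z) \<in> clin_span S"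
    using assms(1) F by (intro clin_span_indexed) (auto simp: subset_iff)
  moreover have "(\<Sum>j\<in>J. c j * f j z)
      = (\<Sum>p\<in>Sigma J F. (c (fst p) * d (fst p) (snd p)) * snd p z)" for z
  proof -
    have "(\<Sum>j\<in>J. c j * f j z) = (\<Sum>j\<in>J. \<Sum>x\<in>F j. c j * d j x * x z)"
      using F by (simp add: sum_distrib_left mult.assoc)
    also have "\<dots> = (\<Sum>p\<in>Sigma J F. (c (fst p) * d (fst p) (snd p)) * snd p z)"
      using assms(1) F by (subst sum.Sigma) (auto simp: split_beta)
    finally show ?thesis .
  qed
  ultimately show ?thesis by simp
qed

(* The Cuntz relation holds only on the unit circle, and L^2 only sees the circle, so spans are
   taken up to equality there. *)
definition circle_span :: "(complex \<Rightarrow> complex) set \<Rightarrow> (complex \<Rightarrow> complex) set" where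
  "circle_span S = {h. \<exists>v\<in>clin_span S. \<forall>z. cmod z = 1 \<longrightarrow> h z = v z}"

lemma circle_span_cong:
  assumes "h' \<in> circle_span S" "\<And>z. cmod z = 1 \<Longrightarrow> h z = h' z"
  shows "h \<in> circle_span S"
  using assms unfolding circle_span_def by auto

lemma clin_span_subset_circle_span: "clin_span S \<subseteq> circle_span S"
  unfolding circle_span_def by blast

lemma clin_span_base: "x \<in> S \<Longrightarrow> x \<in> clin_span S"
  using clin_span_indexed[of "{()}" "\<lambda>_. x" S "\<lambda>_. 1"] by simp

lemma circle_span_base: "x \<in> S \<Longrightarrow> x \<in> circle_span S"
  using clin_span_base clin_span_subset_circle_span by blast

lemma circle_span_sum:
  assumes "finite J" "\<And>j. j \<in> J \<Longrightarrow> c j \<noteq> 0 \<Longrightarrow> f j \<in> circle_span S"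
  shows "(\<lambda>z. \<Sum>j\<in>J. c j * f j z) \<in> circle_span S"
proof -
  define J' where "J' = {j\<in>J. c j \<noteq> 0}"
  have "\<forall>j\<in>J'. \<exists>v. v \<in> clin_span S \<and> (\<forall>z. cmod z = 1 \<longrightarrow> f j z = v z)"
    using assms(2) unfolding circle_span_def J'_def by blast
  from bchoice[OF this] obtain v
    where v: "\<forall>j\<in>J'. v j \<in> clin_span S \<and> (\<forall>z. cmod z = 1 \<longrightarrow> f j z = v j z)" ..
  have "(\<lambda>z. \<Sum>j\<in>J'. c j * v j z) \<in> clin_span S"
    using assms(1) v by (intro clin_span_sum) (auto simp: J'_def)
  then have "(\<lambda>z. \<Sum>j\<in>J'. c j * v j z) \<in> circle_span S"
    using clin_span_subset_circle_span by blast
  moreover have "(\<Sum>j\<in>J. c j * f j z) = (\<Sum>j\<in>J'. c j * v j z)" if "cmod z = 1" for z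
  proof -
    have "(\<Sum>j\<in>J. c j * f j z) = (\<Sum>j\<in>J'. c j * f j z)"
      using assms(1) by (intro sum.mono_neutral_right) (auto simp: J'_def)
    also have "\<dots> = (\<Sum>j\<in>J'. c j * v j z)"
      using v that by simp
    finally show ?thesis .
  qed
  ultimately show ?thesis
    by (rule circle_span_cong)
qed

lemma circle_span_add: "u \<in> circle_span S \<Longrightarrow> v \<in> circle_span S \<Longrightarrow> (\<lambda>z. u z + v z) \<in> circle_span S"
  using circle_span_sum[of UNIV "\<lambda>_. 1" "\<lambda>b. if b then u else v" S]
  by (simp add: UNIV_bool add.commute)

lemma circle_span_scale: "u \<in> circle_span S \<Longrightarrow> (\<lambda>z. a * u z) \<in> circle_span S"
  using circle_span_sum[of "{()}" "\<lambda>_. a" "\<lambda>_. u" S] by simp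

lemma clin_span_subset_circle_spanI:
  assumes "S \<subseteq> circle_span T"
  shows "clin_span S \<subseteq> circle_span T"
proof
  fix h assume "h \<in> clin_span S"
  then obtain F c where "finite F" "F \<subseteq> S" "h = (\<lambda>z. \<Sum>x\<in>F. c x * x z)"
    unfolding clin_span_def by blast
  with assms show "h \<in> circle_span T"
    by (auto intro!: circle_span_sum)
qed

lemma Top_clin_span_generators:
  assumes "i < N" "v \<in> clin_span (generators N g Acoef K)"
  shows "Top N g Acoef i v \<in> clin_span (generators N g Acoef K)"
proof -
  obtain F c where F: "finite F" "F \<subseteq> generators N g Acoef K" and v: "v = (\<lambda>z. \<Sum>x\<in>F. c x * x z)"
    using assms(2) unfolding clin_span_def by blast
  have "Top N g Acoef i x \<in> generators N g Acoef K" if x: "x \<in> F" for x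
  proof -
    obtain w xi where "x = Tword N g Acoef w xi" "set w \<subseteq> {..<N}" "xi \<in> K"
      using x F(2) unfolding generators_def by blast
    then show ?thesis
      using assms(1) unfolding generators_def by (auto intro!: exI[of _ "i # w"])
  qed
  then have "(\<lambda>z. \<Sum>x\<in>F. c x * Top N g Acoef i x z) \<in> clin_span (generators N g Acoef K)"
    by (rule clin_span_indexed[OF F(1)])
  moreover have "Top N g Acoef i v = (\<lambda>z. \<Sum>x\<in>F. c x * Top N g Acoef i x z)"
    unfolding v Top_def by (simp add: sum_distrib_left mult_ac)
  ultimately show ?thesis by simp
qed

lemma Top_circle_span_generators:
  assumes "i < N" "h \<in> circle_span (generators N g Acoef K)"
  shows "Top N g Acoef i h \<in> circle_span (generators N g Acoef K)"
proof -
  obtain v where v: "v \<in> clin_span (generators N g Acoef K)" "\<And>z. cmod z = 1 \<Longrightarrow> h z = v z"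
    using assms(2) unfolding circle_span_def by blast
  have "Top N g Acoef i v \<in> circle_span (generators N g Acoef K)"
    using Top_clin_span_generators[OF assms(1) v(1)] clin_span_subset_circle_span by blast
  then show ?thesis
    by (rule circle_span_cong) (simp add: Top_def v(2) norm_power)
qed

lemma subset_circle_span_generators: "K \<subseteq> circle_span (generators N g Acoef K)"
proof
  fix xi assume "xi \<in> K"
  then have "xi \<in> generators N g Acoef K"
    unfolding generators_def by (auto intro!: exI[of _ "[]"])
  then show "xi \<in> circle_span (generators N g Acoef K)"
    by (rule circle_span_base)
qed

(* On the unit circle this is T_i^* e_n. *)
definition Tadj_e :: "nat \<Rightarrow> nat \<Rightarrow> (nat \<Rightarrow> nat \<Rightarrow> nat \<Rightarrow> complex) \<Rightarrow> nat \<Rightarrow> int \<Rightarrow> complex \<Rightarrow> complex" where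
  "Tadj_e N g Acoef i n =
     (\<lambda>w. \<Sum>q<g. cnj (Acoef q i (nat (n mod int N))) * e (n div int N - int q) w)"

lemma Tadj_e_on_circle:
  assumes "cmod w = 1"
  shows "Tadj_e N g Acoef i n w = w powi (n div int N) * cnj (Aent Acoef g i (nat (n mod int N)) w)"
proof -
  have "w \<noteq> 0"
    using assms by auto
  have "w powi (d - int q) = w powi d * cnj w ^ q" for d q
  proof -
    have "w powi (d - int q) = w powi d / w ^ q"
      using \<open>w \<noteq> 0\<close> by (simp add: power_int_diff)
    also have "\<dots> = w powi d * cnj (w ^ q)"
      using assms by (simp add: divide_conv_cnj norm_power)
    finally show ?thesis by simp
  qed
  then show ?thesis
    unfolding Tadj_e_def Aent_def e_def by (simp add: sum_distrib_left mult_ac)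
qed

lemma cuntz_relation_e:
  assumes N: "N \<ge> 1"
    and loop: "\<And>z. cmod z = 1 \<Longrightarrow> unitary_mat N (\<lambda>i j. Aent Acoef g i j z)"
    and z: "cmod z = 1"
  shows "(\<Sum>i<N. Top N g Acoef i (Tadj_e N g Acoef i n) z) = e n z"
proof -
  define w where "w = z ^ N"
  define j0 where "j0 = nat (n mod int N)"
  define d where "d = n div int N"
  have w: "cmod w = 1" using z by (simp add: w_def norm_power)
  have j0: "j0 < N" and n: "n = int N * d + int j0"
    using N by (simp_all add: j0_def d_def nat_less_iff)
  have columns: "(\<Sum>i<N. cnj (Aent Acoef g i j0 w) * Aent Acoef g i j w) = (if j0 = j then 1 else 0)"
    if "j < N" for j
    using loop[OF w] j0 that unfolding unitary_mat_def by blast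
  have "(\<Sum>i<N. Top N g Acoef i (Tadj_e N g Acoef i n) z)
      = (\<Sum>i<N. \<Sum>j<N. w powi d * (z ^ j * (cnj (Aent Acoef g i j0 w) * Aent Acoef g i j w)))"
    using Tadj_e_on_circle[OF w]
    unfolding Top_def mfun_def d_def j0_def w_def
    by (simp add: sum_distrib_left sum_distrib_right mult_ac)
  also have "\<dots> = w powi d * (\<Sum>j<N. z ^ j * (\<Sum>i<N. cnj (Aent Acoef g i j0 w) * Aent Acoef g i j w))"
    by (subst sum.swap) (simp add: sum_distrib_left)
  also have "\<dots> = w powi d * (\<Sum>j<N. if j = j0 then z ^ j else 0)"
    by (intro arg_cong[where f = "\<lambda>x. w powi d * x"] sum.cong) (auto simp: columns)
  also have "\<dots> = w powi d * z ^ j0"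
    using j0 by simp
  also have "\<dots> = e n z"
  proof -
    have "z \<noteq> 0" "w powi d = z powi (int N * d)"
      using z unfolding w_def by (auto simp: power_int_mult simp flip: power_int_of_nat)
    then show ?thesis
      by (simp add: e_def n power_int_add)
  qed
  finally show ?thesis .
qed

lemma e_in_circle_span_generators_if_Tadj_e:
  assumes "N \<ge> 1" "\<And>z. cmod z = 1 \<Longrightarrow> unitary_mat N (\<lambda>i j. Aent Acoef g i j z)"
    and "\<And>i. i < N \<Longrightarrow> Tadj_e N g Acoef i n \<in> circle_span (generators N g Acoef K)"
  shows "e n \<in> circle_span (generators N g Acoef K)"
proof -
  have "(\<lambda>z. \<Sum>i<N. 1 * Top N g Acoef i (Tadj_e N g Acoef i n) z)
      \<in> circle_span (generators N g Acoef K)"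
    using assms(3) by (intro circle_span_sum Top_circle_span_generators) auto
  then show ?thesis
    by (rule circle_span_cong) (simp add: cuntz_relation_e[OF assms(1,2)])
qed

section \<open>Descent to the window\<close>

definition window_dist :: "nat \<Rightarrow> int \<Rightarrow> nat" where
  "window_dist r n = nat (max n (- int r - n))"

lemma div_minus_gt_below_window:
  fixes n :: int and N g r q :: nat
  assumes N: "N \<ge> 2" and r: "int g * int N - 1 < (int N - 1) * (int r + 1)"
    and n: "n < - int r" and q: "q < g"
  shows "n < n div int N - int q"
proof -
  have "n mod int N < int N" "int N * (n div int N) = n - n mod int N"
    using N by (simp_all add: minus_mod_eq_mult_div)
  moreover have "int N * (n div int N - int g + 1) = int N * (n div int N) - int g * int N + int N"
    by (simp add: algebra_simps)
  ultimately have "int N * (n div int N - int g + 1) \<ge> n - int g * int N + 1"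
    by linarith
  moreover have "(int N - 1) * (- n) \<ge> (int N - 1) * (int r + 1)"
    using n N by (intro mult_left_mono) auto
  then have "n - int g * int N + 1 > int N * n"
    using r by (simp add: algebra_simps)
  ultimately have "int N * (n div int N - int g + 1) > int N * n"
    by linarith
  then have "n div int N - int g + 1 > n"
    using N by (simp add: mult_less_cancel_left)
  with q show ?thesis
    by linarith
qed

lemma window_dist_div_less:
  fixes n :: int and N g r q :: nat
  assumes N: "N \<ge> 2"
    and r: "int g * int N - 1 < (int N - 1) * (int r + 1)" "g \<le> r"
    and pos: "0 < window_dist r n" and q: "q < g"
  shows "window_dist r (n div int N - int q) < window_dist r n"
proof (cases "n > 0")
  case True
  have "0 \<le> n div int N"
    using True N by (simp add: pos_imp_zdiv_nonneg_iff)
  moreover have "n div int N < n"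
    using True N by (intro int_div_less_self) auto
  ultimately show ?thesis
    using True q r(2) by (simp add: window_dist_def)
next
  case False
  then have "n < - int r"
    using pos unfolding window_dist_def by auto
  moreover have "n < n div int N - int q"
    by (rule div_minus_gt_below_window[OF N r(1) calculation q])
  moreover have "n div int N < 0"
    using calculation(1) N by (intro div_neg_pos_less0) auto
  ultimately show ?thesis
    using q by (simp add: window_dist_def)
qed

lemma in_circle_span_generators_clin_span:
  "x \<in> S \<Longrightarrow> x \<in> circle_span (generators N g Acoef (clin_span S))"
  using subset_circle_span_generators clin_span_base by blast

lemma Tadj_e_zero_in_circle_span_K0:
  assumes "Acoef 0 i 0 = 0" "g \<le> r"
  shows "Tadj_e N g Acoef i 0
    \<in> circle_span (generators N g Acoef (clin_span {e (- int m) | m. 1 \<le> m \<and> m \<le> r}))"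
  unfolding Tadj_e_def
proof (rule circle_span_sum)
  fix q assume q: "q \<in> {..<g}" "cnj (Acoef q i (nat (0 mod int N))) \<noteq> 0"
  have "q \<noteq> 0"
    using q(2) by (rule contrapos_nn) (simp add: assms(1))
  with q(1) assms(2) show "e (0 div int N - int q)
      \<in> circle_span (generators N g Acoef (clin_span {e (- int m) | m. 1 \<le> m \<and> m \<le> r}))"
    by (intro in_circle_span_generators_clin_span) auto
qed simp

lemma e_in_circle_span_generators_K0:
  assumes N: "N \<ge> 2"
    and loop: "\<And>z. cmod z = 1 \<Longrightarrow> unitary_mat N (\<lambda>i j. Aent Acoef g i j z)"
    and lam: "\<And>i. i < N \<Longrightarrow> Acoef 0 i 0 = 0"
    and r: "int g * int N - 1 < (int N - 1) * (int r + 1)" "g \<le> r"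
  shows "e n \<in> circle_span (generators N g Acoef (clin_span {e (- int m) | m. 1 \<le> m \<and> m \<le> r}))"
proof (induction n rule: measure_induct_rule[where f = "window_dist r"])
  case (less n)
  let ?K = "clin_span {e (- int m) | m. 1 \<le> m \<and> m \<le> r}"
  have N1: "N \<ge> 1"
    using N by simp
  have "0 < window_dist r n \<longleftrightarrow> 0 < n \<or> n < - int r"
    by (auto simp: window_dist_def)
  then consider "n = 0" | "- int r \<le> n" "n < 0" | "0 < window_dist r n"
    by linarith
  then show ?case
  proof cases
    case 1
    have "Tadj_e N g Acoef i 0 \<in> circle_span (generators N g Acoef ?K)" if "i < N" for i
      using lam[OF that] r(2) by (rule Tadj_e_zero_in_circle_span_K0)
    with 1 show ?thesis
      by (intro e_in_circle_span_generators_if_Tadj_e[OF N1 loop]) auto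
  next
    case 2
    then have "e n \<in> {e (- int m) | m. 1 \<le> m \<and> m \<le> r}"
      by (intro CollectI exI[of _ "nat (- n)"]) auto
    then show ?thesis
      by (rule in_circle_span_generators_clin_span)
  next
    case 3
    have "Tadj_e N g Acoef i n \<in> circle_span (generators N g Acoef ?K)" for i
      unfolding Tadj_e_def
    proof (rule circle_span_sum)
      fix q assume "q \<in> {..<g}"
      then show "e (n div int N - int q) \<in> circle_span (generators N g Acoef ?K)"
        by (intro less window_dist_div_less[OF N r 3]) simp
    qed simp
    then show ?thesis
      by (intro e_in_circle_span_generators_if_Tadj_e[OF N1 loop])
  qed
qed

lemma r0_bounds:
  fixes N g :: nat
  assumes N: "N \<ge> 2" and g: "g \<ge> 1"
  defines "r \<equiv> (g * N - 1) div (N - 1)"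
  shows "int g * int N - 1 < (int N - 1) * (int r + 1)" "g \<le> r"
proof -
  have "g * N \<ge> 1" using N g by (simp add: one_le_mult_iff)
  have "g * N - 1 = (N - 1) * r + (g * N - 1) mod (N - 1)" "(g * N - 1) mod (N - 1) < N - 1"
    using N unfolding r_def by simp_all
  moreover have "(N - 1) * (r + 1) = (N - 1) * r + (N - 1)"
    by simp
  ultimately have "g * N - 1 < (N - 1) * (r + 1)"
    by linarith
  then have "int (g * N - 1) < int ((N - 1) * (r + 1))"
    by (simp only: of_nat_less_iff)
  moreover have "int (g * N - 1) = int g * int N - 1"
    by (simp only: of_nat_diff[OF \<open>g * N \<ge> 1\<close>] of_nat_mult of_nat_1)
  moreover have "int (N - 1) = int N - 1"
    using N by simp
  then have "int ((N - 1) * (r + 1)) = (int N - 1) * (int r + 1)"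
    by (simp only: of_nat_mult of_nat_add of_nat_1)
  ultimately show "int g * int N - 1 < (int N - 1) * (int r + 1)"
    by (simp only:)
  have "g * (N - 1) \<le> g * N - 1" using g N by (simp add: right_diff_distrib')
  then show "g \<le> r"
    unfolding r_def using N by (simp add: less_eq_div_iff_mult_less_eq)
qed

section \<open>Trigonometric polynomials\<close>

lemma circle_span_mult:
  assumes S: "\<And>x y. x \<in> S \<Longrightarrow> y \<in> S \<Longrightarrow> (\<lambda>z. x z * y z) \<in> circle_span S"
    and u: "u \<in> circle_span S" and v: "v \<in> circle_span S"
  shows "(\<lambda>z. u z * v z) \<in> circle_span S"
proof -
  obtain F c where F: "finite F" "F \<subseteq> S" and u': "\<And>z. cmod z = 1 \<Longrightarrow> u z = (\<Sum>x\<in>F. c x * x z)"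
    using u unfolding circle_span_def clin_span_def by blast
  obtain G d where G: "finite G" "G \<subseteq> S" and v': "\<And>z. cmod z = 1 \<Longrightarrow> v z = (\<Sum>y\<in>G. d y * y z)"
    using v unfolding circle_span_def clin_span_def by blast
  have "(\<lambda>z. \<Sum>p\<in>F \<times> G. (c (fst p) * d (snd p)) * (fst p z * snd p z)) \<in> circle_span S"
    using F G by (intro circle_span_sum S) auto
  then show ?thesis
    by (rule circle_span_cong)
      (simp add: u' v' sum_product sum.cartesian_product case_prod_beta mult_ac)
qed

lemma inverse_unimodular: "cmod z = 1 \<Longrightarrow> inverse z = cnj z"
  using divide_conv_cnj[of z 1] by (simp add: divide_inverse)

lemma trig_poly_mult:
  assumes "u \<in> circle_span (range e)" "v \<in> circle_span (range e)"
  shows "(\<lambda>z. u z * v z) \<in> circle_span (range e)"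
proof (rule circle_span_mult[OF _ assms])
  fix x y assume "x \<in> range e" "y \<in> range e"
  then obtain m n where "x = e m" "y = e n" by blast
  then show "(\<lambda>z. x z * y z) \<in> circle_span (range e)"
  proof (intro circle_span_cong[OF circle_span_base[of "e (m + n)"]])
    fix z :: complex assume "cmod z = 1"
    then have "z \<noteq> 0" by auto
    then show "x z * y z = e (m + n) z"
      by (simp add: \<open>x = e m\<close> \<open>y = e n\<close> e_def power_int_add)
  qed simp
qed

lemma trig_poly_const: "(\<lambda>z. a) \<in> circle_span (range e)"
  using circle_span_scale[OF circle_span_base[of "e 0" "range e"], of a] by (simp add: e_def)

lemma e_minus_one_unimodular: "cmod z = 1 \<Longrightarrow> e (-1) z = cnj z"
  by (simp add: e_def power_int_minus inverse_unimodular)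

lemma trig_poly_Re: "(\<lambda>z. complex_of_real (Re z)) \<in> circle_span (range e)"
proof -
  have "(\<lambda>z. (1/2) * e 1 z + (1/2) * e (-1) z) \<in> circle_span (range e)"
    by (intro circle_span_add circle_span_scale circle_span_base) auto
  moreover have "complex_of_real (Re z) = (1/2) * e 1 z + (1/2) * e (-1) z" if "cmod z = 1" for z
    using complex_add_cnj[of z] e_minus_one_unimodular[OF that] by (simp add: e_def field_simps)
  ultimately show ?thesis
    by (rule circle_span_cong)
qed

lemma trig_poly_Im: "(\<lambda>z. complex_of_real (Im z)) \<in> circle_span (range e)"
proof -
  have "(\<lambda>z. (1/(2*\<i>)) * e 1 z + (- 1/(2*\<i>)) * e (-1) z) \<in> circle_span (range e)"
    by (intro circle_span_add circle_span_scale circle_span_base) auto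
  moreover have "complex_of_real (Im z) = (1/(2*\<i>)) * e 1 z + (- 1/(2*\<i>)) * e (-1) z"
    if "cmod z = 1" for z
    using complex_diff_cnj[of z] e_minus_one_unimodular[OF that] by (simp add: e_def field_simps)
  ultimately show ?thesis
    by (rule circle_span_cong)
qed

lemma trig_poly_real_polynomial_function:
  assumes "real_polynomial_function h"
  shows "(\<lambda>z. complex_of_real (h z)) \<in> circle_span (range e)"
  using assms
proof (induction h rule: real_polynomial_function.induct)
  case (linear h)
  then have "linear h"
    by (rule bounded_linear.linear)
  have h: "h z = Re z * h 1 + Im z * h \<i>" for z
  proof -
    have "z = Re z *\<^sub>R 1 + Im z *\<^sub>R \<i>"
      by (simp add: complex_eq_iff)
    then have "h z = h (Re z *\<^sub>R 1 + Im z *\<^sub>R \<i>)"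
      by simp
    also have "\<dots> = Re z * h 1 + Im z * h \<i>"
      using \<open>linear h\<close> by (simp add: linear_add linear_scale)
    finally show ?thesis .
  qed
  have "(\<lambda>z. complex_of_real (h 1) * complex_of_real (Re z)
      + complex_of_real (h \<i>) * complex_of_real (Im z)) \<in> circle_span (range e)"
    by (intro circle_span_add circle_span_scale trig_poly_Re trig_poly_Im)
  then show ?case
    by (rule circle_span_cong) (subst h, simp add: mult.commute)
next
  case (const c)
  then show ?case by (rule trig_poly_const)
next
  case (add f g)
  then show ?case by (simp add: circle_span_add)
next
  case (mult f g)
  then show ?case by (simp add: trig_poly_mult)
qed

lemma trig_poly_polynomial_function:
  assumes "polynomial_function P"
  shows "P \<in> circle_span (range e)"
proof -
  have "real_polynomial_function (\<lambda>z. Re (P z))" "real_polynomial_function (\<lambda>z. Im (P z))"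
    using assms unfolding polynomial_function_def o_def
    by (auto intro: bounded_linear_Re bounded_linear_Im)
  then have "(\<lambda>z. complex_of_real (Re (P z)) + \<i> * complex_of_real (Im (P z)))
      \<in> circle_span (range e)"
    by (intro circle_span_add circle_span_scale trig_poly_real_polynomial_function)
  then show ?thesis
    by (simp add: complex_eq[symmetric])
qed

section \<open>Approximation in the square mean on the unit interval\<close>

definition radial_clip :: "real \<Rightarrow> 'a::real_normed_vector \<Rightarrow> 'a" where
  "radial_clip B x = (B / max B (norm x)) *\<^sub>R x"

lemma norm_radial_clip_le:
  assumes "B > 0"
  shows "norm (radial_clip B x) \<le> B"
  using assms by (auto simp: radial_clip_def max_def field_simps)

lemma radial_clip_eq_self: "norm x \<le> B \<Longrightarrow> radial_clip B x = x"
  by (cases "x = 0") (auto simp: radial_clip_def max_def)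

lemma norm_diff_radial_clip_le:
  assumes "B > 0"
  shows "norm (x - radial_clip B x) \<le> norm x"
proof -
  have "0 \<le> B / max B (norm x)" "B / max B (norm x) \<le> 1"
    using assms by auto
  then have "norm ((1 - B / max B (norm x)) *\<^sub>R x) \<le> norm x"
    by (simp add: mult_left_le_one_le)
  then show ?thesis
    by (simp add: radial_clip_def algebra_simps)
qed

lemma continuous_on_radial_clip:
  assumes "B > 0"
  shows "continuous_on S (radial_clip B)"
  unfolding radial_clip_def using assms by (intro continuous_intros) auto

definition square_integrable :: "(real \<Rightarrow> complex) \<Rightarrow> bool" where
  "square_integrable F \<longleftrightarrow>
     F \<in> borel_measurable (lebesgue_on {0..1}) \<and>
     integrable (lebesgue_on {0..1}) (\<lambda>t. (cmod (F t))\<^sup>2)"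

definition L2_sqdist :: "(real \<Rightarrow> complex) \<Rightarrow> (real \<Rightarrow> complex) \<Rightarrow> real" where
  "L2_sqdist F G = integral\<^sup>L (lebesgue_on {0..1}) (\<lambda>t. (cmod (F t - G t))\<^sup>2)"

lemma L2T_iff_square_integrable: "f \<in> L2T \<longleftrightarrow> square_integrable (\<lambda>t. f (circ t))"
  by (simp add: L2T_def square_integrable_def)

lemma l2_norm_eq_L2_sqdist:
  "l2_norm (\<lambda>z. f z - g z) = sqrt (L2_sqdist (\<lambda>t. f (circ t)) (\<lambda>t. g (circ t)))"
  by (simp add: l2_norm_def L2_sqdist_def)

lemma norm_diff_squared_le:
  fixes a b :: "'a::real_normed_vector"
  shows "(norm (a - b))\<^sup>2 \<le> 2 * (norm a)\<^sup>2 + 2 * (norm b)\<^sup>2"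
proof -
  have "(norm (a - b))\<^sup>2 \<le> (norm a + norm b)\<^sup>2"
    by (intro power_mono norm_triangle_ineq4) simp
  also have "\<dots> \<le> 2 * (norm a)\<^sup>2 + 2 * (norm b)\<^sup>2"
    using sum_squares_bound[of "norm a" "norm b"] by (simp add: power2_eq_square algebra_simps)
  finally show ?thesis .
qed

lemma square_integrable_diff:
  assumes "square_integrable F" "square_integrable G"
  shows "square_integrable (\<lambda>t. F t - G t)"
  unfolding square_integrable_def
proof
  show meas: "(\<lambda>t. F t - G t) \<in> borel_measurable (lebesgue_on {0..1})"
    using assms unfolding square_integrable_def by auto
  have "integrable (lebesgue_on {0..1}) (\<lambda>t. 2 * (cmod (F t))\<^sup>2 + 2 * (cmod (G t))\<^sup>2)"
    using assms unfolding square_integrable_def by auto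
  then show "integrable (lebesgue_on {0..1}) (\<lambda>t. (cmod (F t - G t))\<^sup>2)"
    by (rule Bochner_Integration.integrable_bound) (use meas norm_diff_squared_le in auto)
qed

lemma square_integrable_bounded:
  assumes "F \<in> borel_measurable (lebesgue_on {0..1})" "\<And>t. t \<in> {0..1} \<Longrightarrow> cmod (F t) \<le> B"
  shows "square_integrable F"
  unfolding square_integrable_def
proof
  have "integrable (lebesgue_on {0..1::real}) (\<lambda>t. B\<^sup>2)"
    by (rule continuous_imp_integrable_real) simp
  then show "integrable (lebesgue_on {0..1}) (\<lambda>t. (cmod (F t))\<^sup>2)"
    by (rule Bochner_Integration.integrable_bound)
      (use assms in \<open>auto intro!: AE_I2 power_mono\<close>)
qed (rule assms(1))

lemma square_integrable_continuous:
  "continuous_on {0..1} F \<Longrightarrow> square_integrable F"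
  unfolding square_integrable_def
  by (intro conjI continuous_imp_measurable_on_sets_lebesgue continuous_imp_integrable_real
      continuous_intros) auto

lemma L2_sqdist_triangle:
  assumes "square_integrable F" "square_integrable G" "square_integrable H"
  shows "L2_sqdist F H \<le> 2 * L2_sqdist F G + 2 * L2_sqdist G H"
proof -
  have FG: "integrable (lebesgue_on {0..1}) (\<lambda>t. (cmod (F t - G t))\<^sup>2)"
    and GH: "integrable (lebesgue_on {0..1}) (\<lambda>t. (cmod (G t - H t))\<^sup>2)"
    and FH: "integrable (lebesgue_on {0..1}) (\<lambda>t. (cmod (F t - H t))\<^sup>2)"
    using square_integrable_diff assms unfolding square_integrable_def by blast+
  have "(cmod (F t - H t))\<^sup>2 \<le> 2 * (cmod (F t - G t))\<^sup>2 + 2 * (cmod (G t - H t))\<^sup>2" for t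
    using norm_diff_squared_le[of "F t - G t" "H t - G t"] by (simp add: norm_minus_commute)
  then have "L2_sqdist F H \<le> integral\<^sup>L (lebesgue_on {0..1})
      (\<lambda>t. 2 * (cmod (F t - G t))\<^sup>2 + 2 * (cmod (G t - H t))\<^sup>2)"
    unfolding L2_sqdist_def using FG GH FH by (intro integral_mono) auto
  also have "\<dots> = 2 * L2_sqdist F G + 2 * L2_sqdist G H"
    unfolding L2_sqdist_def using FG GH by simp
  finally show ?thesis .
qed

lemma L2_sqdist_le_uniform:
  assumes "square_integrable (\<lambda>t. F t - G t)" "\<And>t. t \<in> {0..1} \<Longrightarrow> cmod (F t - G t) \<le> \<delta>"
  shows "L2_sqdist F G \<le> \<delta>\<^sup>2"
proof -
  have "L2_sqdist F G \<le> integral\<^sup>L (lebesgue_on {0..1::real}) (\<lambda>t. \<delta>\<^sup>2)"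
    unfolding L2_sqdist_def
  proof (rule integral_mono)
    show "integrable (lebesgue_on {0..1}) (\<lambda>t. (cmod (F t - G t))\<^sup>2)"
      using assms(1) by (simp add: square_integrable_def)
    show "(cmod (F t - G t))\<^sup>2 \<le> \<delta>\<^sup>2" if "t \<in> space (lebesgue_on {0..1})" for t
      using assms(2)[of t] that by (intro power_mono) auto
  qed (rule continuous_imp_integrable_real, simp)
  then show ?thesis
    by (simp add: measure_restrict_space)
qed

lemma L2_sqdist_dominated_convergence:
  assumes [measurable]: "F \<in> borel_measurable (lebesgue_on {0..1})"
    "\<And>n. G n \<in> borel_measurable (lebesgue_on {0..1})"
    and w: "integrable (lebesgue_on {0..1}) w"
    and lim: "AE t in lebesgue_on {0..1}. (\<lambda>n. G n t) \<longlonglongrightarrow> F t"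
    and bound: "\<And>n. AE t in lebesgue_on {0..1}. (cmod (F t - G n t))\<^sup>2 \<le> w t"
  shows "(\<lambda>n. L2_sqdist F (G n)) \<longlonglongrightarrow> 0"
proof -
  have "(\<lambda>n. L2_sqdist F (G n)) \<longlonglongrightarrow> integral\<^sup>L (lebesgue_on {0..1::real}) (\<lambda>t. 0::real)"
    unfolding L2_sqdist_def
  proof (rule integral_dominated_convergence[OF _ _ w])
    show "AE t in lebesgue_on {0..1}. (\<lambda>n. (cmod (F t - G n t))\<^sup>2) \<longlonglongrightarrow> 0"
      using lim by eventually_elim (auto intro!: tendsto_eq_intros)
    show "AE t in lebesgue_on {0..1}. norm ((cmod (F t - G n t))\<^sup>2) \<le> w t" for n
      using bound[of n] by eventually_elim simp
  qed simp_all
  then show ?thesis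
    by simp
qed

lemma L2_sqdist_radial_clip_tendsto:
  assumes F: "square_integrable F"
  shows "(\<lambda>M. L2_sqdist F (\<lambda>t. radial_clip (real M + 1) (F t))) \<longlonglongrightarrow> 0"
proof (rule L2_sqdist_dominated_convergence)
  show meas [measurable]: "F \<in> borel_measurable (lebesgue_on {0..1})"
    using F by (simp add: square_integrable_def)
  show "(\<lambda>t. radial_clip (real M + 1) (F t)) \<in> borel_measurable (lebesgue_on {0..1})" for M
    unfolding radial_clip_def by measurable
  show "integrable (lebesgue_on {0..1}) (\<lambda>t. (cmod (F t))\<^sup>2)"
    using F by (simp add: square_integrable_def)
  show "AE t in lebesgue_on {0..1}.
      (cmod (F t - radial_clip (real M + 1) (F t)))\<^sup>2 \<le> (cmod (F t))\<^sup>2" for M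
    by (intro AE_I2) (simp add: power_mono norm_diff_radial_clip_le)
  show "AE t in lebesgue_on {0..1}. (\<lambda>M. radial_clip (real M + 1) (F t)) \<longlonglongrightarrow> F t"
  proof (intro AE_I2 tendsto_eventually)
    fix t
    obtain M0 :: nat where "cmod (F t) \<le> real M0"
      using real_arch_simple by blast
    then show "\<forall>\<^sub>F M in sequentially. radial_clip (real M + 1) (F t) = F t"
      unfolding eventually_sequentially by (auto intro!: exI[of _ M0] simp: radial_clip_eq_self)
  qed
qed

lemma AE_lebesgue_on_unit_interval:
  fixes N :: "real set"
  assumes "negligible N" "\<And>t. t \<in> {0<..<1} \<Longrightarrow> t \<notin> N \<Longrightarrow> P t"
  shows "AE t in lebesgue_on {0..1}. P t"
proof (rule AE_I')
  have "N \<union> {0, 1} \<in> null_sets lebesgue"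
    using assms(1) by (simp add: negligible_iff_null_sets null_sets.insert_in_sets)
  then show "(N \<union> {0, 1}) \<inter> {0..1} \<in> null_sets (lebesgue_on {0..1})"
    by (subst null_sets_restrict_space) (auto intro: null_set_Int2)
qed (use assms(2) in \<open>auto simp: less_le\<close>)

lemma tendsto_cutoff_unit_interval:
  assumes "t \<in> {0<..<1}"
  shows "(\<lambda>n. min 1 (real n * (t * (1 - t)))) \<longlonglongrightarrow> 1"
proof (rule tendsto_eventually)
  define p where "p = t * (1 - t)"
  have "p > 0"
    using assms by (simp add: p_def)
  obtain n0 :: nat where "1 / p \<le> real n0"
    using real_arch_simple by blast
  then have "1 \<le> real n * p" if "n \<ge> n0" for n
    using that \<open>p > 0\<close> by (simp add: pos_divide_le_eq order_trans[OF _ mult_right_mono])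
  then show "\<forall>\<^sub>F n in sequentially. min 1 (real n * (t * (1 - t))) = 1"
    unfolding eventually_sequentially p_def by (auto simp: min_def)
qed

lemma bounded_continuous_L2_approx:
  assumes F: "F \<in> borel_measurable (lebesgue_on {0..1})" and B: "B > 0"
    and bound: "\<And>t. t \<in> {0..1} \<Longrightarrow> cmod (F t) \<le> B" and "\<epsilon> > 0"
  obtains \<phi> where "continuous_on UNIV \<phi>" "\<phi> 0 = 0" "\<phi> 1 = 0" "L2_sqdist F \<phi> < \<epsilon>"
proof -
  have "F measurable_on {0..1}"
    using F by (simp add: measurable_on_iff_borel_measurable)
  then obtain N g where N: "negligible N" and g: "\<And>n. continuous_on UNIV (g n)"
    and g_lim: "\<And>t. t \<notin> N \<Longrightarrow> (\<lambda>n. g n t) \<longlonglongrightarrow> (if t \<in> {0..1} then F t else 0)"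
    unfolding measurable_on_def by blast
  \<comment> \<open>clip the continuous approximants g n to the ball of radius B and damp them to 0 at 0 and 1\<close>
  define \<phi> where
    "\<phi> n t = complex_of_real (min 1 (real n * (t * (1 - t)))) * radial_clip B (g n t)" for n t
  have \<phi>_cont: "continuous_on UNIV (\<phi> n)" for n
    unfolding \<phi>_def
    by (intro continuous_intros continuous_on_compose2[OF continuous_on_radial_clip[OF B] g]) auto
  have \<phi>_bound: "cmod (\<phi> n t) \<le> B" if "t \<in> {0..1}" for n t
  proof -
    have "\<bar>min 1 (real n * (t * (1 - t)))\<bar> \<le> 1"
      using that by (auto simp: abs_le_iff)
    then show ?thesis
      unfolding \<phi>_def norm_mult using norm_radial_clip_le[OF B, of "g n t"]
      by (simp add: mult_le_one mult_le_cancel_right1 order_trans[OF mult_right_mono])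
  qed
  have "(\<lambda>n. L2_sqdist F (\<phi> n)) \<longlonglongrightarrow> 0"
  proof (rule L2_sqdist_dominated_convergence[OF F])
    show "\<phi> n \<in> borel_measurable (lebesgue_on {0..1})" for n
      by (intro continuous_imp_measurable_on_sets_lebesgue continuous_on_subset[OF \<phi>_cont]) auto
    show "integrable (lebesgue_on {0..1::real}) (\<lambda>t. (2 * B)\<^sup>2)"
      by (rule continuous_imp_integrable_real) simp
    show "AE t in lebesgue_on {0..1}. (cmod (F t - \<phi> n t))\<^sup>2 \<le> (2 * B)\<^sup>2" for n
    proof (intro AE_I2)
      fix t assume "t \<in> space (lebesgue_on {0..1::real})"
      then have "t \<in> {0..1}"
        by simp
      then have "cmod (F t - \<phi> n t) \<le> 2 * B"
        using bound[of t] \<phi>_bound[of t n] norm_triangle_ineq4[of "F t" "\<phi> n t"] by linarith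
      from power_mono[OF this norm_ge_zero, of 2]
      show "(cmod (F t - \<phi> n t))\<^sup>2 \<le> (2 * B)\<^sup>2" .
    qed
    show "AE t in lebesgue_on {0..1}. (\<lambda>n. \<phi> n t) \<longlonglongrightarrow> F t"
    proof (rule AE_lebesgue_on_unit_interval[OF N])
      fix t :: real assume t: "t \<in> {0<..<1}" "t \<notin> N"
      have "isCont (radial_clip B) (F t)"
        using continuous_on_radial_clip[OF B, of "UNIV :: complex set"]
        by (simp add: continuous_on_eq_continuous_at)
      moreover have "(\<lambda>n. g n t) \<longlonglongrightarrow> F t"
        using g_lim[OF t(2)] t(1) by simp
      ultimately have "(\<lambda>n. radial_clip B (g n t)) \<longlonglongrightarrow> radial_clip B (F t)"
        by (rule isCont_tendsto_compose)
      with tendsto_of_real[OF tendsto_cutoff_unit_interval[OF t(1)]]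
      have "(\<lambda>n. \<phi> n t) \<longlonglongrightarrow> 1 * radial_clip B (F t)"
        unfolding \<phi>_def by (intro tendsto_mult) auto
      then show "(\<lambda>n. \<phi> n t) \<longlonglongrightarrow> F t"
        using bound t(1) by (simp add: radial_clip_eq_self)
    qed
  qed
  then have "\<forall>\<^sub>F n in sequentially. L2_sqdist F (\<phi> n) < \<epsilon>"
    using \<open>\<epsilon> > 0\<close> by (simp add: order_tendstoD(2))
  then obtain n where "L2_sqdist F (\<phi> n) < \<epsilon>"
    by (auto simp: eventually_sequentially)
  moreover have "\<phi> n 0 = 0" "\<phi> n 1 = 0"
    by (simp_all add: \<phi>_def)
  ultimately show ?thesis
    using that \<phi>_cont by blast
qed

lemma square_integrable_continuous_L2_approx:
  assumes F: "square_integrable F" and "\<epsilon> > 0"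
  obtains \<phi> where "continuous_on UNIV \<phi>" "\<phi> 0 = 0" "\<phi> 1 = 0" "L2_sqdist F \<phi> < \<epsilon>"
proof -
  have meas [measurable]: "F \<in> borel_measurable (lebesgue_on {0..1})"
    using F by (simp add: square_integrable_def)
  have "\<forall>\<^sub>F M in sequentially. L2_sqdist F (\<lambda>t. radial_clip (real M + 1) (F t)) < \<epsilon> / 4"
    using \<open>\<epsilon> > 0\<close> by (intro order_tendstoD(2)[OF L2_sqdist_radial_clip_tendsto[OF F]]) simp
  then obtain M where M: "L2_sqdist F (\<lambda>t. radial_clip (real M + 1) (F t)) < \<epsilon> / 4"
    by (auto simp: eventually_sequentially)
  define G where "G t = radial_clip (real M + 1) (F t)" for t
  have G_meas: "G \<in> borel_measurable (lebesgue_on {0..1})"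
    unfolding G_def radial_clip_def by measurable
  have G_bound: "cmod (G t) \<le> real M + 1" for t
    unfolding G_def by (rule norm_radial_clip_le) simp
  have "real M + 1 > 0" "\<epsilon> / 4 > 0"
    using \<open>\<epsilon> > 0\<close> by auto
  then obtain \<phi> where \<phi>: "continuous_on UNIV \<phi>" "\<phi> 0 = 0" "\<phi> 1 = 0" "L2_sqdist G \<phi> < \<epsilon> / 4"
    by (rule bounded_continuous_L2_approx[OF G_meas _ G_bound])
  have "L2_sqdist F \<phi> \<le> 2 * L2_sqdist F G + 2 * L2_sqdist G \<phi>"
    using F square_integrable_bounded[OF G_meas G_bound]
      square_integrable_continuous[OF continuous_on_subset[OF \<phi>(1)]]
    by (intro L2_sqdist_triangle) auto
  also have "\<dots> < \<epsilon>"
    using M \<phi>(4) unfolding G_def by linarith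
  finally show ?thesis
    using that \<phi>(1-3) by blast
qed

lemma Arg2pi_circ: "t \<in> {0..<1} \<Longrightarrow> Arg2pi (circ t) = 2 * pi * t"
  by (rule Arg2pi_unique[of 1]) (auto simp: circ_def cis_conv_exp)

lemma periodic_Arg2pi_circ:
  assumes "\<phi> 0 = \<phi> 1" "t \<in> {0..1}"
  shows "\<phi> (Arg2pi (circ t) / (2 * pi)) = \<phi> t"
proof (cases "t = 1")
  case True
  then show ?thesis
    using assms(1) Arg2pi_of_real[of 1] by (simp add: circ_def)
next
  case False
  with assms(2) show ?thesis
    by (simp add: Arg2pi_circ)
qed

lemma continuous_on_sphere_Arg2pi:
  assumes cont: "continuous_on {0..1} \<phi>" and per: "\<phi> 0 = \<phi> 1"
  shows "continuous_on (sphere 0 1) (\<lambda>z. \<phi> (Arg2pi z / (2 * pi)))"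
  unfolding continuous_on_closed_vimage[OF closed_sphere]
proof (intro allI impI)
  fix B :: "'a set" assume "closed B"
  \<comment> \<open>circ maps the compact interval onto the circle, so these preimages are compact images\<close>
  have "(\<lambda>z. \<phi> (Arg2pi z / (2 * pi))) -` B \<inter> sphere 0 1 = circ ` ({0..1} \<inter> \<phi> -` B)"
  proof (intro equalityI subsetI)
    fix z assume z: "z \<in> (\<lambda>z. \<phi> (Arg2pi z / (2 * pi))) -` B \<inter> sphere 0 1"
    define t where "t = Arg2pi z / (2 * pi)"
    have "t \<in> {0..<1}"
      using Arg2pi[of z] by (simp add: t_def)
    moreover have "circ t = z"
      using z Arg2pi_eq[of z] by (simp add: t_def circ_def cis_conv_exp)
    ultimately show "z \<in> circ ` ({0..1} \<inter> \<phi> -` B)"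
      using z by (intro rev_image_eqI[where x = t]) (auto simp: t_def)
  next
    fix z assume "z \<in> circ ` ({0..1} \<inter> \<phi> -` B)"
    then show "z \<in> (\<lambda>z. \<phi> (Arg2pi z / (2 * pi))) -` B \<inter> sphere 0 1"
      using periodic_Arg2pi_circ[OF per] by auto
  qed
  moreover have "compact ({0..1} \<inter> \<phi> -` B)"
    unfolding compact_eq_bounded_closed
    using continuous_closed_preimage[OF cont closed_atLeastAtMost \<open>closed B\<close>]
    by (auto intro: bounded_subset[OF bounded_closed_interval])
  ultimately show "closed ((\<lambda>z. \<phi> (Arg2pi z / (2 * pi))) -` B \<inter> sphere 0 1)"
    by (metis compact_imp_closed compact_continuous_image continuous_on_circ)
qed

lemma trig_poly_uniform_approx:
  fixes \<phi> :: "real \<Rightarrow> complex"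
  assumes "continuous_on {0..1} \<phi>" "\<phi> 0 = \<phi> 1" "\<delta> > 0"
  obtains v where "v \<in> clin_span (range e)" "\<And>t. t \<in> {0..1} \<Longrightarrow> cmod (\<phi> t - v (circ t)) < \<delta>"
proof -
  obtain P where P: "polynomial_function P"
    "\<And>z. z \<in> sphere 0 1 \<Longrightarrow> cmod (\<phi> (Arg2pi z / (2 * pi)) - P z) < \<delta>"
    using Stone_Weierstrass_polynomial_function[OF compact_sphere
        continuous_on_sphere_Arg2pi[OF assms(1,2)] assms(3)] by blast
  obtain v where v: "v \<in> clin_span (range e)" "\<And>z. cmod z = 1 \<Longrightarrow> P z = v z"
    using trig_poly_polynomial_function[OF P(1)] unfolding circle_span_def by blast
  have "cmod (\<phi> t - v (circ t)) < \<delta>" if "t \<in> {0..1}" for t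
    using P(2)[of "circ t"] periodic_Arg2pi_circ[OF assms(2) that] v(2)[of "circ t"] by simp
  with v(1) that show ?thesis by blast
qed

section \<open>Density of trigonometric polynomials and cyclicity\<close>

lemma L2T_trig_poly_dense:
  assumes f: "f \<in> L2T" and \<epsilon>: "\<epsilon> > 0"
  obtains v where "v \<in> clin_span (range e)" "l2_norm (\<lambda>z. f z - v z) < \<epsilon>"
proof -
  define F where "F = (\<lambda>t. f (circ t))"
  have F: "square_integrable F"
    using f by (simp add: L2T_iff_square_integrable F_def)
  have "\<epsilon>\<^sup>2 / 4 > 0"
    using \<epsilon> by simp
  with F obtain \<phi> where \<phi>: "continuous_on UNIV \<phi>" "\<phi> 0 = 0" "\<phi> 1 = 0" "L2_sqdist F \<phi> < \<epsilon>\<^sup>2 / 4"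
    by (rule square_integrable_continuous_L2_approx)
  have \<phi>01: "continuous_on {0..1} \<phi>"
    using \<phi>(1) by (rule continuous_on_subset) simp
  moreover have "\<phi> 0 = \<phi> 1" "\<epsilon> / 4 > 0"
    using \<phi> \<epsilon> by simp_all
  ultimately obtain v where v: "v \<in> clin_span (range e)"
    and close: "\<And>t. t \<in> {0..1} \<Longrightarrow> cmod (\<phi> t - v (circ t)) < \<epsilon> / 4"
    by (rule trig_poly_uniform_approx) blast
  define V where "V = (\<lambda>t. v (circ t))"
  have V: "square_integrable V"
    unfolding V_def using continuous_on_sphere_clin_span[OF _ v] continuous_on_sphere_e
    by (intro square_integrable_continuous continuous_on_circ_compose) blast
  have \<phi>V: "square_integrable (\<lambda>t. \<phi> t - V t)"
    using square_integrable_diff[OF square_integrable_continuous[OF \<phi>01] V] .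
  have "L2_sqdist \<phi> V \<le> (\<epsilon> / 4)\<^sup>2"
    using \<phi>V close by (intro L2_sqdist_le_uniform) (auto simp: V_def less_imp_le)
  then have "L2_sqdist F V < \<epsilon>\<^sup>2"
    using L2_sqdist_triangle[OF F square_integrable_continuous[OF \<phi>01] V] \<phi>(4)
    by (simp add: power_divide) (use zero_le_power2[of \<epsilon>] in linarith)
  then have "sqrt (L2_sqdist F V) < \<epsilon>"
    using \<epsilon> by (intro real_less_lsqrt) simp_all
  then have "l2_norm (\<lambda>z. f z - v z) < \<epsilon>"
    by (simp add: l2_norm_eq_L2_sqdist F_def V_def)
  with v that show ?thesis by blast
qed

lemma cyclic_if_monomials_in_circle_span:
  assumes "\<And>n. e n \<in> circle_span (generators N g Acoef M)"
  shows "cyclic N g Acoef M"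
  unfolding cyclic_iff_generators
proof (intro ballI allI impI)
  fix f :: "complex \<Rightarrow> complex" and \<epsilon> :: real
  assume "f \<in> L2T" "\<epsilon> > 0"
  then obtain v where v: "v \<in> clin_span (range e)" "l2_norm (\<lambda>z. f z - v z) < \<epsilon>"
    by (rule L2T_trig_poly_dense)
  have "v \<in> circle_span (generators N g Acoef M)"
    using clin_span_subset_circle_spanI[of "range e"] assms v(1) by blast
  then obtain h where h: "h \<in> clin_span (generators N g Acoef M)" "\<And>z. cmod z = 1 \<Longrightarrow> v z = h z"
    unfolding circle_span_def by blast
  have "l2_norm (\<lambda>z. f z - h z) = l2_norm (\<lambda>z. f z - v z)"
    by (simp add: l2_norm_def h(2))
  with v(2) show "\<exists>h\<in>clin_span (generators N g Acoef M). l2_norm (\<lambda>z. f z - h z) < \<epsilon>"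
    by (intro bexI[OF _ h(1)]) simp
qed

theorem corollary6p4:
  fixes N g :: nat and Acoef :: "nat \<Rightarrow> nat \<Rightarrow> nat \<Rightarrow> complex"
  assumes N: "N \<ge> 2" and g: "g \<ge> 1"
    and loop: "\<And>z. cmod z = 1 \<Longrightarrow> unitary_mat N (\<lambda>i j. Aent Acoef g i j z)"
    and top: "\<exists>i<N. \<exists>j<N. Acoef (g - 1) i j \<noteq> 0"
  defines "r0 \<equiv> (g * N - 1) div (N - 1)"
  defines "K0 \<equiv> clin_span {e (- int n) | n. 1 \<le> n \<and> n \<le> r0}"
  defines "K1 \<equiv> clin_span {e (- int n) | n. n \<le> r0 - 1}"
  shows "((\<forall>i<N. adj_eigvec (Top N g Acoef i) (e 0)) \<longrightarrow> \<not> cyclic N g Acoef K0)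
       \<and> (((N - 1) dvd (g * N - 1) \<and> (\<forall>i<N. adj_eigvec (Top N g Acoef i) (e (- int r0))))
            \<longrightarrow> \<not> cyclic N g Acoef K1)
       \<and> ((\<Sum>i<N. (cmod (Acoef 0 i 0))\<^sup>2) = 0 \<longrightarrow> cyclic N g Acoef K0)"
proof (intro conjI impI)
  have r0: "int g * int N - 1 < (int N - 1) * (int r0 + 1)" "g \<le> r0"
    using r0_bounds[OF N g] unfolding r0_def by auto
  show "\<not> cyclic N g Acoef K0" if "\<forall>i<N. adj_eigvec (Top N g Acoef i) (e 0)"
    unfolding K0_def using that by (rule not_cyclic_K0)
  show "\<not> cyclic N g Acoef K1"
    if "(N - 1) dvd (g * N - 1) \<and> (\<forall>i<N. adj_eigvec (Top N g Acoef i) (e (- int r0)))"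
    unfolding K1_def using that r0 g by (intro not_cyclic_K1) auto
  assume "(\<Sum>i<N. (cmod (Acoef 0 i 0))\<^sup>2) = 0"
  then have "Acoef 0 i 0 = 0" if "i < N" for i
    using that by (simp add: sum_nonneg_eq_0_iff)
  then show "cyclic N g Acoef K0"
    unfolding K0_def
    by (intro cyclic_if_monomials_in_circle_span e_in_circle_span_generators_K0[OF N loop _ r0])
qed

end
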